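(* Let $f:\mathbb{R}^n\to(-\infty,+\infty]$ be proper and lower semicontinuous with $\bar x\in\operatorname{dom}f$, and let $g:\mathbb{R}^n\to(-\infty,+\infty]$ be convex and continuously differentiable on a neighborhood of $\bar x$. If $f$ is variationally convex at $\bar x$ for $\bar v\in\partial f(\bar x)$, then $f+g$ is variationally convex at $\bar x$ for $\bar v+\nabla g(\bar x)\in\partial(f+g)(\bar x)$.
   Context: $\partial$ is the limiting (Mordukhovich) subdifferential. A lsc $h$ is variationally convex at $\bar x$ for $\bar v\in\partial h(\bar x)$ if for some convex neighborhood $U\times V$ of $(\bar x,\bar v)$ there are a lsc convex function $\varphi\le h$ on $U$ and $\varepsilon>0$ such that $[U_\varepsilon\times V]\cap\operatorname{gph}\partial h=[U\times V]\cap\operatorname{gph}\partial\varphi$ and $h(x)=\varphi(x)$ at the common elements $(x,v)$, where $U_\varepsilon=\{x\in U:h(x)<h(\bar x)+\varepsilon\}$. *)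

theory Defs
  imports "HOL-Analysis.Analysis"
begin

definition proper_fun :: "('a \<Rightarrow> ereal) \<Rightarrow> bool" where
  "proper_fun f \<longleftrightarrow> (\<forall>x. f x \<noteq> -\<infinity>) \<and> (\<exists>x. f x \<noteq> \<infinity>)"

definition lsc_on :: "'a::topological_space set \<Rightarrow> ('a \<Rightarrow> ereal) \<Rightarrow> bool" where
  "lsc_on S f \<longleftrightarrow> (\<forall>x\<in>S. f x \<le> Liminf (at x within S) f)"

definition ext_convex_on :: "'a::real_vector set \<Rightarrow> ('a \<Rightarrow> ereal) \<Rightarrow> bool" where
  "ext_convex_on S f \<longleftrightarrow> convex S \<and>
     (\<forall>x\<in>S. \<forall>y\<in>S. \<forall>t::real. 0 < t \<and> t < 1 \<longrightarrow>
        f ((1 - t) *\<^sub>R x + t *\<^sub>R y) \<le> ereal (1 - t) * f x + ereal t * f y)"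

definition frechet_subdiff :: "('a::real_inner \<Rightarrow> ereal) \<Rightarrow> 'a \<Rightarrow> 'a set" where
  "frechet_subdiff f x = {v. \<bar>f x\<bar> \<noteq> \<infinity> \<and>
     (\<forall>e>0. \<exists>d>0. \<forall>y. norm (y - x) < d \<longrightarrow>
        f y \<ge> f x + ereal (v \<bullet> (y - x)) - ereal (e * norm (y - x)))}"

definition limiting_subdiff :: "('a::real_inner \<Rightarrow> ereal) \<Rightarrow> 'a \<Rightarrow> 'a set" where
  "limiting_subdiff f x = {v. \<bar>f x\<bar> \<noteq> \<infinity> \<and>
     (\<exists>xs vs. xs \<longlonglongrightarrow> x \<and> (\<lambda>k. f (xs k)) \<longlonglongrightarrow> f x \<and> vs \<longlonglongrightarrow> v \<and>
        (\<forall>k. vs k \<in> frechet_subdiff f (xs k)))}"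

definition var_convex_at :: "('a::real_inner \<Rightarrow> ereal) \<Rightarrow> 'a \<Rightarrow> 'a \<Rightarrow> bool" where
  "var_convex_at h xb vb \<longleftrightarrow> vb \<in> limiting_subdiff h xb \<and>
     (\<exists>U V \<phi> (\<epsilon>::real).
        open U \<and> convex U \<and> xb \<in> U \<and> open V \<and> convex V \<and> vb \<in> V \<and> \<epsilon> > 0 \<and>
        ext_convex_on U \<phi> \<and> lsc_on U \<phi> \<and> (\<forall>x\<in>U. \<phi> x \<noteq> -\<infinity> \<and> \<phi> x \<le> h x) \<and>
        {(x, v). x \<in> U \<and> h x < h xb + ereal \<epsilon> \<and> v \<in> V \<and> v \<in> limiting_subdiff h x}
          = {(x, v). x \<in> U \<and> v \<in> V \<and> v \<in> limiting_subdiff \<phi> x} \<and>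
        (\<forall>x v. x \<in> U \<and> v \<in> V \<and> v \<in> limiting_subdiff \<phi> x \<longrightarrow> h x = \<phi> x))"

end

theory Submission
  imports Defs
begin

text \<open>Near \<open>xb\<close>, adding the \<open>C\<^sup>1\<close> function \<open>g\<close> shifts limiting subgradients by its gradient:
  \<open>v \<in> \<partial>(f + g) x \<longleftrightarrow> v - G x \<in> \<partial>f x\<close>, and likewise for the convex minorant \<open>\<phi>\<close> of \<open>f\<close>.
  So the convex, lower semicontinuous function \<open>\<phi> + g\<close> serves as the minorant of \<open>f + g\<close>
  on small balls around \<open>xb\<close> and \<open>vb + G xb\<close>, once the level constraints are matched: on these
  balls \<open>g\<close> varies by less than \<open>\<epsilon>/2\<close>, and at points of the graph of \<open>\<partial>\<phi>\<close> the subgradient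
  inequality \<open>\<phi> x \<le> \<phi> xb + (v - G x) \<bullet> (x - xb)\<close> keeps \<open>f + g\<close> below its value at \<open>xb\<close>
  plus \<open>\<epsilon>/2\<close>.\<close>

lemma frechet_subdiff_add_differentiable:
  fixes F H :: "'a::real_inner \<Rightarrow> ereal"
  assumes v: "v \<in> frechet_subdiff F x" and W: "open W" "x \<in> W"
    and H: "\<forall>y\<in>W. H y = F y + ereal (gr y)"
    and gr: "(gr has_derivative (\<lambda>u. a \<bullet> u)) (at x)"
  shows "v + a \<in> frechet_subdiff H x"
proof -
  from v have fr: "\<forall>e>0. \<exists>d>0. \<forall>y. norm (y - x) < d \<longrightarrow>
        F y \<ge> F x + ereal (v \<bullet> (y - x)) - ereal (e * norm (y - x))"
    unfolding frechet_subdiff_def by auto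
  from v obtain fx where fx: "F x = ereal fx" unfolding frechet_subdiff_def by (cases "F x") auto
  have Hx: "H x = ereal (fx + gr x)" using H W fx by simp
  have "\<exists>d>0. \<forall>y. norm (y - x) < d \<longrightarrow>
        H y \<ge> H x + ereal ((v + a) \<bullet> (y - x)) - ereal (e * norm (y - x))" if "e > 0" for e
  proof -
    obtain d1 where d1: "d1 > 0" "\<forall>y. norm (y - x) < d1 \<longrightarrow>
        F y \<ge> F x + ereal (v \<bullet> (y - x)) - ereal (e/2 * norm (y - x))"
      using fr \<open>e > 0\<close> by (meson half_gt_zero)
    obtain d2 where d2: "d2 > 0" "\<forall>y. norm (y - x) < d2 \<longrightarrow>
        norm (gr y - gr x - a \<bullet> (y - x)) \<le> e/2 * norm (y - x)"
      using gr \<open>e > 0\<close> unfolding has_derivative_at_alt by (meson half_gt_zero)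
    obtain d3 where d3: "d3 > 0" "ball x d3 \<subseteq> W" using W openE by blast
    show ?thesis
    proof (intro exI[of _ "min d1 (min d2 d3)"] conjI allI impI)
      show "min d1 (min d2 d3) > 0" using d1 d2 d3 by simp
      fix y assume y: "norm (y - x) < min d1 (min d2 d3)"
      have "y \<in> W" using y d3 by (auto simp: dist_norm norm_minus_commute)
      have Fy: "F y \<ge> ereal (fx + v \<bullet> (y - x) - e/2 * norm (y - x))"
        using d1 y fx by simp
      have gry: "gr y \<ge> gr x + a \<bullet> (y - x) - e/2 * norm (y - x)"
        using d2 y by (smt (verit) real_norm_def)
      show "H y \<ge> H x + ereal ((v + a) \<bullet> (y - x)) - ereal (e * norm (y - x))"
        using Fy gry H \<open>y \<in> W\<close> Hx by (cases "F y") (auto simp: inner_add_left)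
    qed
  qed
  then show ?thesis using Hx unfolding frechet_subdiff_def by auto
qed

lemma limiting_subdiff_add_C1:
  fixes F H :: "'a::real_inner \<Rightarrow> ereal"
  assumes v: "v \<in> limiting_subdiff F x" and W: "open W" "x \<in> W"
    and H: "\<forall>y\<in>W. H y = F y + ereal (gr y)"
    and gr: "\<forall>y\<in>W. (gr has_derivative (\<lambda>u. G y \<bullet> u)) (at y)"
    and G: "continuous_on W G"
  shows "v + G x \<in> limiting_subdiff H x"
proof -
  from v have fin: "\<bar>F x\<bar> \<noteq> \<infinity>" unfolding limiting_subdiff_def by auto
  from v obtain xs vs where xs: "xs \<longlonglongrightarrow> x" and Fxs: "(\<lambda>k. F (xs k)) \<longlonglongrightarrow> F x"
    and vs: "vs \<longlonglongrightarrow> v" and fr: "\<forall>k. vs k \<in> frechet_subdiff F (xs k)"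
    unfolding limiting_subdiff_def by auto
  obtain N where N: "\<forall>k\<ge>N. xs k \<in> W"
    using xs W unfolding tendsto_def eventually_sequentially by blast
  define ys where "ys k = xs (k + N)" for k
  define ws where "ws k = vs (k + N) + G (ys k)" for k
  have ysW: "ys k \<in> W" for k using N ys_def by simp
  have ys: "ys \<longlonglongrightarrow> x" unfolding ys_def using xs by (rule LIMSEQ_ignore_initial_segment)
  have "isCont gr x" using gr W has_derivative_continuous by blast
  then have "(\<lambda>k. gr (ys k)) \<longlonglongrightarrow> gr x" using ys isCont_tendsto_compose by blast
  moreover have "(\<lambda>k. F (ys k)) \<longlonglongrightarrow> F x"
    unfolding ys_def using Fxs by (rule LIMSEQ_ignore_initial_segment)
  ultimately have "(\<lambda>k. F (ys k) + ereal (gr (ys k))) \<longlonglongrightarrow> F x + ereal (gr x)"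
    using fin by (intro tendsto_add_ereal) auto
  then have Hys: "(\<lambda>k. H (ys k)) \<longlonglongrightarrow> H x" using H ysW W by simp
  have "isCont G x" using G W continuous_on_eq_continuous_at by blast
  then have "(\<lambda>k. G (ys k)) \<longlonglongrightarrow> G x" using ys isCont_tendsto_compose by blast
  then have ws: "ws \<longlonglongrightarrow> v + G x"
    unfolding ws_def using LIMSEQ_ignore_initial_segment[OF vs] by (intro tendsto_add) auto
  have "ws k \<in> frechet_subdiff H (ys k)" for k
  proof -
    have "vs (k + N) \<in> frechet_subdiff F (ys k)" using fr ys_def by simp
    from frechet_subdiff_add_differentiable[OF this W(1) ysW H] gr ysW
    show ?thesis unfolding ws_def by blast
  qed
  moreover have "\<bar>H x\<bar> \<noteq> \<infinity>" using H W fin by auto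
  ultimately show ?thesis unfolding limiting_subdiff_def using ys Hys ws by blast
qed

lemma limiting_subdiff_add_C1_iff:
  fixes F H :: "'a::real_inner \<Rightarrow> ereal"
  assumes W: "open W" "x \<in> W"
    and H: "\<forall>y\<in>W. H y = F y + ereal (gr y)"
    and gr: "\<forall>y\<in>W. (gr has_derivative (\<lambda>u. G y \<bullet> u)) (at y)"
    and G: "continuous_on W G"
  shows "v \<in> limiting_subdiff H x \<longleftrightarrow> v - G x \<in> limiting_subdiff F x"
proof
  assume "v - G x \<in> limiting_subdiff F x"
  from limiting_subdiff_add_C1[OF this W H gr G] show "v \<in> limiting_subdiff H x" by simp
next
  assume v: "v \<in> limiting_subdiff H x"
  have "F y = H y + ereal (- gr y)" if "y \<in> W" for y
    using H that by (cases "F y") auto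
  then have F: "\<forall>y\<in>W. F y = H y + ereal (- gr y)" by blast
  have "\<forall>y\<in>W. ((\<lambda>y. - gr y) has_derivative (\<lambda>u. (- G y) \<bullet> u)) (at y)"
    using gr by (auto intro: has_derivative_minus)
  from limiting_subdiff_add_C1[OF v W F this] G continuous_on_minus
  show "v - G x \<in> limiting_subdiff F x" by fastforce
qed

lemma frechet_subdiff_convex_slack:
  fixes \<phi> :: "'a::real_inner \<Rightarrow> ereal"
  assumes \<phi>: "ext_convex_on U \<phi>" and xU: "x \<in> U" and yU: "y \<in> U"
    and w: "w \<in> frechet_subdiff \<phi> x" and a: "\<phi> x = ereal a" and b: "\<phi> y \<le> ereal b"
    and "e > 0"
  shows "a + w \<bullet> (y - x) \<le> b + e * norm (y - x)"
proof -
  \<comment> \<open>Compare the Frechet lower bound and the convexity upper bound at \<open>x + t (y - x)\<close>, \<open>t\<close> small.\<close>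
  define n where "n = norm (y - x)"
  have "0 \<le> n" by (simp add: n_def)
  obtain d where d: "d > 0" "\<forall>z. norm (z - x) < d \<longrightarrow>
      \<phi> z \<ge> \<phi> x + ereal (w \<bullet> (z - x)) - ereal (e * norm (z - x))"
    using w \<open>e > 0\<close> unfolding frechet_subdiff_def by blast
  define t where "t = min (1/2) (d / (2 * n + 1))"
  have t: "0 < t" "t < 1" using d by (auto simp: t_def n_def add_nonneg_pos)
  have "t * n \<le> d / (2 * n + 1) * n" unfolding t_def n_def by (intro mult_right_mono) auto
  also have "\<dots> = d * (n / (2 * n + 1))" by simp
  also have "\<dots> < d * 1"
    using d(1) \<open>0 \<le> n\<close> by (intro mult_strict_left_mono) (auto simp: divide_less_eq_1)
  finally have "t * n < d" by simp
  define z where "z = (1 - t) *\<^sub>R x + t *\<^sub>R y"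
  have zx: "z - x = t *\<^sub>R (y - x)" unfolding z_def by (simp add: algebra_simps)
  then have "norm (z - x) = t * n" using t unfolding n_def by simp
  then have "ereal (a + t * (w \<bullet> (y - x)) - e * (t * n)) \<le> \<phi> z"
    using d(2)[rule_format, of z] \<open>t * n < d\<close> a zx by simp
  also have "\<phi> z \<le> ereal (1 - t) * \<phi> x + ereal t * \<phi> y"
    using \<phi> xU yU t unfolding ext_convex_on_def z_def by blast
  also have "\<dots> \<le> ereal (1 - t) * ereal a + ereal t * ereal b"
    using b t unfolding a by (intro add_left_mono ereal_mult_left_mono) auto
  also have "\<dots> = ereal ((1 - t) * a + t * b)" by simp
  finally have "t * (a + w \<bullet> (y - x)) \<le> t * (b + e * n)" by (simp add: algebra_simps)
  then show ?thesis using t(1) unfolding n_def by (metis mult_le_cancel_left_pos)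
qed

lemma frechet_subdiff_convex_ineq:
  fixes \<phi> :: "'a::real_inner \<Rightarrow> ereal"
  assumes \<phi>: "ext_convex_on U \<phi>" and xU: "x \<in> U" and yU: "y \<in> U"
    and w: "w \<in> frechet_subdiff \<phi> x"
  shows "\<phi> x + ereal (w \<bullet> (y - x)) \<le> \<phi> y"
proof (rule ereal_le_real)
  fix b assume b: "\<phi> y \<le> ereal b"
  from w obtain a where a: "\<phi> x = ereal a" unfolding frechet_subdiff_def by (cases "\<phi> x") auto
  have "a + w \<bullet> (y - x) \<le> b"
  proof (rule field_le_epsilon)
    fix e :: real assume "e > 0"
    define n where "n = norm (y - x)"
    have "0 \<le> n" by (simp add: n_def)
    then have "e / (n + 1) > 0" using \<open>e > 0\<close> by simp
    from frechet_subdiff_convex_slack[OF \<phi> xU yU w a b this]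
    have "a + w \<bullet> (y - x) \<le> b + e * (n / (n + 1))" by (simp add: n_def)
    also have "\<dots> \<le> b + e * 1"
      using \<open>e > 0\<close> \<open>0 \<le> n\<close> by (intro add_left_mono mult_left_mono) (auto simp: divide_le_eq_1)
    finally show "a + w \<bullet> (y - x) \<le> b + e" by simp
  qed
  then show "\<phi> x + ereal (w \<bullet> (y - x)) \<le> ereal b" using a by simp
qed

lemma limiting_subdiff_convex_ineq:
  fixes \<phi> :: "'a::real_inner \<Rightarrow> ereal"
  assumes \<phi>: "ext_convex_on U \<phi>" and U: "open U" and xU: "x \<in> U" and yU: "y \<in> U"
    and w: "w \<in> limiting_subdiff \<phi> x"
  shows "\<phi> x + ereal (w \<bullet> (y - x)) \<le> \<phi> y"
proof -
  from w obtain xs ws where xs: "xs \<longlonglongrightarrow> x" and \<phi>xs: "(\<lambda>k. \<phi> (xs k)) \<longlonglongrightarrow> \<phi> x"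
    and ws: "ws \<longlonglongrightarrow> w" and fr: "\<forall>k. ws k \<in> frechet_subdiff \<phi> (xs k)"
    unfolding limiting_subdiff_def by auto
  have "(\<lambda>k. \<phi> (xs k) + ereal (ws k \<bullet> (y - xs k))) \<longlonglongrightarrow> \<phi> x + ereal (w \<bullet> (y - x))"
    using w unfolding limiting_subdiff_def
    by (intro tendsto_add_ereal tendsto_intros \<phi>xs ws xs) auto
  moreover have "eventually (\<lambda>k. xs k \<in> U) sequentially"
    using xs U xU by (simp add: tendsto_def)
  then have "eventually (\<lambda>k. \<phi> (xs k) + ereal (ws k \<bullet> (y - xs k)) \<le> \<phi> y) sequentially"
    by eventually_elim (use frechet_subdiff_convex_ineq[OF \<phi> _ yU] fr in blast)
  ultimately show ?thesis by (rule tendsto_upperbound) simp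
qed

lemma ext_convex_on_subset_cong:
  assumes "ext_convex_on S f" "convex T" "T \<subseteq> S" "\<forall>x\<in>T. f' x = f x"
  shows "ext_convex_on T f'"
proof -
  have "(1 - t) *\<^sub>R x + t *\<^sub>R y \<in> T" if "x \<in> T" "y \<in> T" "0 < t" "t < 1" for x y t
    using \<open>convex T\<close> that by (simp add: convex_alt)
  then show ?thesis using assms unfolding ext_convex_on_def by (metis subsetD)
qed

lemma ext_convex_on_add:
  assumes f: "ext_convex_on S f" and g: "ext_convex_on S g"
  shows "ext_convex_on S (\<lambda>x. f x + g x)"
  unfolding ext_convex_on_def
proof (intro conjI ballI allI impI)
  show "convex S" using f unfolding ext_convex_on_def by blast
  fix x y t assume x: "x \<in> S" and y: "y \<in> S" and t: "0 < t \<and> t < (1::real)"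
  let ?z = "(1 - t) *\<^sub>R x + t *\<^sub>R y"
  have "f ?z \<le> ereal (1 - t) * f x + ereal t * f y" "g ?z \<le> ereal (1 - t) * g x + ereal t * g y"
    using f g x y t unfolding ext_convex_on_def by blast+
  then have "f ?z + g ?z \<le> (ereal (1 - t) * f x + ereal t * f y) + (ereal (1 - t) * g x + ereal t * g y)"
    by (rule add_mono)
  also have "\<dots> = ereal (1 - t) * (f x + g x) + ereal t * (f y + g y)"
    using t by (simp add: ereal_pos_distrib add_ac)
  finally show "f ?z + g ?z \<le> ereal (1 - t) * (f x + g x) + ereal t * (f y + g y)" .
qed

lemma lsc_on_subset:
  assumes "lsc_on U f" "S \<subseteq> U"
  shows "lsc_on S f"
  unfolding lsc_on_def le_Liminf_iff
proof (intro ballI allI impI)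
  fix x c assume "x \<in> S" "c < f x"
  then have "eventually (\<lambda>y. c < f y) (at x within U)"
    using assms unfolding lsc_on_def le_Liminf_iff by blast
  then show "eventually (\<lambda>y. c < f y) (at x within S)"
    using at_le[OF \<open>S \<subseteq> U\<close>] by (rule filter_leD[rotated])
qed

lemma lsc_on_add_continuous:
  assumes f: "lsc_on S f" and g: "continuous_on S g"
  shows "lsc_on S (\<lambda>x. f x + ereal (g x))"
  unfolding lsc_on_def le_Liminf_iff
proof (intro ballI allI impI)
  fix x c assume x: "x \<in> S" and c: "c < f x + ereal (g x)"
  then have "c - ereal (g x) < f x" by (cases c; cases "f x") simp_all
  then obtain b where b: "c - ereal (g x) < ereal b" "ereal b < f x"
    using ereal_dense2 by blast
  then obtain a where a: "c - ereal (g x) < ereal a" "a < b"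
    using ereal_dense2 by fastforce
  have "eventually (\<lambda>y. ereal b < f y) (at x within S)"
    using f x b(2) unfolding lsc_on_def le_Liminf_iff by blast
  moreover have "eventually (\<lambda>y. g x - (b - a) < g y) (at x within S)"
    using g x a(2) unfolding continuous_on_def by (intro order_tendstoD(1)) auto
  ultimately show "eventually (\<lambda>y. c < f y + ereal (g y)) (at x within S)"
  proof eventually_elim
    case (elim y)
    then have "ereal (a + g x) < f y + ereal (g y)" by (cases "f y") simp_all
    moreover have "c \<le> ereal (a + g x)" using a(1) by (cases c) simp_all
    ultimately show ?case by simp
  qed
qed

lemma open_contains_ball_times_ball:
  fixes a :: "'a::metric_space" and b :: "'b::metric_space"
  assumes "open S" "(a, b) \<in> S"
  obtains r where "r > 0" "ball a r \<times> ball b r \<subseteq> S"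
proof -
  obtain A B where AB: "open A" "open B" "(a, b) \<in> A \<times> B" "A \<times> B \<subseteq> S"
    using open_prod_elim[OF assms] by blast
  obtain r1 r2 where "r1 > 0" "ball a r1 \<subseteq> A" "r2 > 0" "ball b r2 \<subseteq> B"
    using AB openE by (metis mem_Sigma_iff)
  then have "min r1 r2 > 0" "ball a (min r1 r2) \<times> ball b (min r1 r2) \<subseteq> S"
    using AB(4) by (auto simp: subset_iff)
  then show ?thesis using that by blast
qed

lemma small_shift_balls_exist:
  fixes gr :: "'a::real_inner \<Rightarrow> real"
  assumes "open U" "open V" "open W" "xb \<in> U" "xb \<in> W" "vb \<in> V" "\<delta> > 0"
    and gr: "continuous_on W gr" and G: "continuous_on W G"
  obtains r where "r > 0" and "\<And>x v. x \<in> ball xb r \<Longrightarrow> v \<in> ball (vb + G xb) r \<Longrightarrow>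
    x \<in> U \<inter> W \<and> v - G x \<in> V \<and> \<bar>gr x - gr xb\<bar> < \<delta> \<and>
    (v - G x) \<bullet> (x - xb) + (gr x - gr xb) < \<delta>"
proof -
  define \<Phi> where "\<Phi> p = (snd p - G (fst p), gr (fst p) - gr xb,
      (snd p - G (fst p)) \<bullet> (fst p - xb) + (gr (fst p) - gr xb))" for p
  define S where "S = ((U \<inter> W) \<times> UNIV) \<inter> \<Phi> -` (V \<times> {-\<delta><..<\<delta>} \<times> {..<\<delta>})"
  have "continuous_on ((U \<inter> W) \<times> UNIV) \<Phi>"
    unfolding \<Phi>_def
    by (intro continuous_intros continuous_on_compose2[OF G] continuous_on_compose2[OF gr]) auto
  then have "open S"
    unfolding S_def using assms(1-3) by (intro continuous_open_preimage open_Times open_Int) auto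
  moreover have "(xb, vb + G xb) \<in> S"
    using assms(4-7) by (simp add: S_def \<Phi>_def)
  ultimately obtain r where "r > 0" "ball xb r \<times> ball (vb + G xb) r \<subseteq> S"
    by (rule open_contains_ball_times_ball)
  then show ?thesis
    using that by (fastforce simp: S_def \<Phi>_def abs_less_iff)
qed

definition var_convex_witness ::
    "('a::real_inner \<Rightarrow> ereal) \<Rightarrow> 'a \<Rightarrow> 'a \<Rightarrow> 'a set \<Rightarrow> 'a set \<Rightarrow> ('a \<Rightarrow> ereal) \<Rightarrow> real \<Rightarrow> bool"
  where "var_convex_witness h xb vb U V \<phi> \<epsilon> \<longleftrightarrow>
    vb \<in> limiting_subdiff h xb \<and>
    open U \<and> convex U \<and> xb \<in> U \<and> open V \<and> convex V \<and> vb \<in> V \<and> \<epsilon> > 0 \<and>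
    ext_convex_on U \<phi> \<and> lsc_on U \<phi> \<and> (\<forall>x\<in>U. \<phi> x \<noteq> -\<infinity> \<and> \<phi> x \<le> h x) \<and>
    (\<forall>x v. (x \<in> U \<and> h x < h xb + ereal \<epsilon> \<and> v \<in> V \<and> v \<in> limiting_subdiff h x) \<longleftrightarrow>
           (x \<in> U \<and> v \<in> V \<and> v \<in> limiting_subdiff \<phi> x)) \<and>
    (\<forall>x v. x \<in> U \<and> v \<in> V \<and> v \<in> limiting_subdiff \<phi> x \<longrightarrow> h x = \<phi> x)"

lemma var_convex_at_iff_witness:
  "var_convex_at h xb vb \<longleftrightarrow> (\<exists>U V \<phi> \<epsilon>. var_convex_witness h xb vb U V \<phi> \<epsilon>)"
  unfolding var_convex_at_def var_convex_witness_def by (simp add: set_eq_iff)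

lemma var_convex_witness_base_point:
  assumes "var_convex_witness h xb vb U V \<phi> \<epsilon>"
  obtains a where "h xb = ereal a" "\<phi> xb = ereal a" "vb \<in> limiting_subdiff \<phi> xb"
proof -
  from assms obtain a where a: "h xb = ereal a"
    unfolding var_convex_witness_def limiting_subdiff_def by (cases "h xb") auto
  with assms have "xb \<in> U \<and> h xb < h xb + ereal \<epsilon> \<and> vb \<in> V \<and> vb \<in> limiting_subdiff h xb"
    unfolding var_convex_witness_def by simp
  with assms have "vb \<in> limiting_subdiff \<phi> xb" "h xb = \<phi> xb"
    unfolding var_convex_witness_def by blast+
  with a that show ?thesis by simp
qed

locale var_convex_C1_perturbation =
  fixes f g \<phi> :: "'a::real_inner \<Rightarrow> ereal" and gr :: "'a \<Rightarrow> real" and G :: "'a \<Rightarrow> 'a"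
    and xb vb :: 'a and U V W :: "'a set" and \<epsilon> r :: real
  assumes witness: "var_convex_witness f xb vb U V \<phi> \<epsilon>"
    and open_W: "open W" and g_eq: "\<forall>y\<in>W. g y = ereal (gr y)" and g_convex: "ext_convex_on UNIV g"
    and gr_deriv: "\<forall>y\<in>W. (gr has_derivative (\<lambda>u. G y \<bullet> u)) (at y)"
    and G_cont: "continuous_on W G"
    and r_pos: "r > 0"
    and small: "\<And>x v. x \<in> ball xb r \<Longrightarrow> v \<in> ball (vb + G xb) r \<Longrightarrow>
      x \<in> U \<inter> W \<and> v - G x \<in> V \<and> \<bar>gr x - gr xb\<bar> < \<epsilon>/2 \<and>
      (v - G x) \<bullet> (x - xb) + (gr x - gr xb) < \<epsilon>/2"
begin

abbreviation h where "h \<equiv> \<lambda>x. f x + g x"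
abbreviation \<psi> where "\<psi> \<equiv> \<lambda>x. \<phi> x + ereal (gr x)"

lemma ball_subset: "ball xb r \<subseteq> U" "ball xb r \<subseteq> W"
proof -
  have "x \<in> U \<inter> W" if "x \<in> ball xb r" for x
    using small[OF that, of "vb + G xb"] r_pos by simp
  then show "ball xb r \<subseteq> U" "ball xb r \<subseteq> W" by auto
qed

lemma h_base_point: obtains a where "f xb = ereal a" "\<phi> xb = ereal a" "h xb = ereal (a + gr xb)"
proof -
  obtain a where "f xb = ereal a" "\<phi> xb = ereal a"
    using var_convex_witness_base_point[OF witness] by blast
  moreover have "xb \<in> W" using ball_subset r_pos by auto
  ultimately show ?thesis using that g_eq by simp
qed

lemma h_subdiff_iff: "x \<in> W \<Longrightarrow> v \<in> limiting_subdiff h x \<longleftrightarrow> v - G x \<in> limiting_subdiff f x"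
  using limiting_subdiff_add_C1_iff[OF open_W _ _ gr_deriv G_cont] g_eq by simp

lemma \<psi>_subdiff_iff: "x \<in> W \<Longrightarrow> v \<in> limiting_subdiff \<psi> x \<longleftrightarrow> v - G x \<in> limiting_subdiff \<phi> x"
  using limiting_subdiff_add_C1_iff[OF open_W _ _ gr_deriv G_cont] by simp

lemma f_graph_iff:
  "(x \<in> U \<and> f x < f xb + ereal \<epsilon> \<and> w \<in> V \<and> w \<in> limiting_subdiff f x) \<longleftrightarrow>
   (x \<in> U \<and> w \<in> V \<and> w \<in> limiting_subdiff \<phi> x)"
  using witness unfolding var_convex_witness_def by blast

lemma f_eq_on_graph: "x \<in> U \<Longrightarrow> w \<in> V \<Longrightarrow> w \<in> limiting_subdiff \<phi> x \<Longrightarrow> f x = \<phi> x"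
  using witness unfolding var_convex_witness_def by blast

lemma h_graph_imp_\<psi>_graph:
  assumes "x \<in> ball xb r" "v \<in> ball (vb + G xb) r"
    and "h x < h xb + ereal (\<epsilon>/2)" "v \<in> limiting_subdiff h x"
  shows "v \<in> limiting_subdiff \<psi> x"
proof -
  from small[OF assms(1,2)] have x: "x \<in> U" "x \<in> W" and "v - G x \<in> V"
    and "\<bar>gr x - gr xb\<bar> < \<epsilon>/2" by auto
  have w: "v - G x \<in> limiting_subdiff f x" using h_subdiff_iff x(2) assms(4) by blast
  then obtain b where fx: "f x = ereal b"
    unfolding limiting_subdiff_def by (cases "f x") auto
  obtain a where fxb: "f xb = ereal a" and hxb: "h xb = ereal (a + gr xb)"
    using h_base_point by blast
  have "b + gr x < a + gr xb + \<epsilon>/2" using assms(3) fx hxb g_eq x(2) by simp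
  then have "b < a + \<epsilon>" using \<open>\<bar>gr x - gr xb\<bar> < \<epsilon>/2\<close> by linarith
  then have "f x < f xb + ereal \<epsilon>" using fx fxb by simp
  then have "v - G x \<in> limiting_subdiff \<phi> x" using f_graph_iff x(1) \<open>v - G x \<in> V\<close> w by blast
  then show ?thesis using \<psi>_subdiff_iff x(2) by blast
qed

lemma \<psi>_graph_imp_h_graph:
  assumes "x \<in> ball xb r" "v \<in> ball (vb + G xb) r" "v \<in> limiting_subdiff \<psi> x"
  shows "v \<in> limiting_subdiff h x" "h x = \<psi> x" "h x < h xb + ereal (\<epsilon>/2)"
proof -
  from small[OF assms(1,2)] have x: "x \<in> U" "x \<in> W" and "v - G x \<in> V"
    and small_x: "(v - G x) \<bullet> (x - xb) + (gr x - gr xb) < \<epsilon>/2" by auto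
  have w: "v - G x \<in> limiting_subdiff \<phi> x" using \<psi>_subdiff_iff x(2) assms(3) by blast
  then have "v - G x \<in> limiting_subdiff f x" and fx: "f x = \<phi> x"
    using f_graph_iff f_eq_on_graph x(1) \<open>v - G x \<in> V\<close> by blast+
  then show "v \<in> limiting_subdiff h x" using h_subdiff_iff x(2) by blast
  show h\<psi>: "h x = \<psi> x" using fx g_eq x(2) by simp
  obtain a where \<phi>xb: "\<phi> xb = ereal a" and hxb: "h xb = ereal (a + gr xb)"
    using h_base_point by blast
  obtain p where p: "\<phi> x = ereal p"
    using w unfolding limiting_subdiff_def by (cases "\<phi> x") auto
  have "ext_convex_on U \<phi>" "open U" "xb \<in> U"
    using witness unfolding var_convex_witness_def by auto
  then have "\<phi> x + ereal ((v - G x) \<bullet> (xb - x)) \<le> \<phi> xb"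
    using limiting_subdiff_convex_ineq x(1) w by blast
  then have "p - (v - G x) \<bullet> (x - xb) \<le> a"
    using p \<phi>xb by (simp add: inner_diff_right)
  then show "h x < h xb + ereal (\<epsilon>/2)"
    using small_x hxb p h\<psi> by simp
qed

lemma \<psi>_convex: "ext_convex_on (ball xb r) \<psi>"
proof (rule ext_convex_on_add)
  have "ext_convex_on U \<phi>" using witness unfolding var_convex_witness_def by blast
  then show "ext_convex_on (ball xb r) \<phi>"
    using ext_convex_on_subset_cong[OF _ convex_ball ball_subset(1)] by simp
  show "ext_convex_on (ball xb r) (\<lambda>x. ereal (gr x))"
    using g_eq ball_subset(2) by (intro ext_convex_on_subset_cong[OF g_convex convex_ball]) auto
qed

lemma \<psi>_lsc: "lsc_on (ball xb r) \<psi>"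
proof (rule lsc_on_add_continuous)
  have "lsc_on U \<phi>" using witness unfolding var_convex_witness_def by blast
  then show "lsc_on (ball xb r) \<phi>" using ball_subset(1) by (rule lsc_on_subset)
  have "continuous_on W gr"
    using gr_deriv by (meson continuous_at_imp_continuous_on has_derivative_continuous)
  then show "continuous_on (ball xb r) gr" using ball_subset(2) by (rule continuous_on_subset)
qed

lemma \<psi>_below_h:
  assumes "x \<in> ball xb r"
  shows "\<psi> x \<noteq> -\<infinity> \<and> \<psi> x \<le> h x"
proof -
  have "x \<in> U" "g x = ereal (gr x)" using assms ball_subset g_eq by auto
  moreover have "\<forall>x\<in>U. \<phi> x \<noteq> -\<infinity> \<and> \<phi> x \<le> f x"
    using witness unfolding var_convex_witness_def by blast
  ultimately show ?thesis by (simp add: add_right_mono)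
qed

lemma shifted_witness:
  "var_convex_witness h xb (vb + G xb) (ball xb r) (ball (vb + G xb) r) \<psi> (\<epsilon>/2)"
proof -
  obtain "vb \<in> limiting_subdiff f xb" "\<epsilon> > 0"
    using witness unfolding var_convex_witness_def by blast
  moreover have "xb \<in> W" using ball_subset r_pos by auto
  ultimately have "vb + G xb \<in> limiting_subdiff h xb" "\<epsilon>/2 > 0"
    using h_subdiff_iff by auto
  moreover have "(x \<in> ball xb r \<and> h x < h xb + ereal (\<epsilon>/2) \<and> v \<in> ball (vb + G xb) r \<and>
        v \<in> limiting_subdiff h x) \<longleftrightarrow>
      (x \<in> ball xb r \<and> v \<in> ball (vb + G xb) r \<and> v \<in> limiting_subdiff \<psi> x)" for x v
    using h_graph_imp_\<psi>_graph \<psi>_graph_imp_h_graph by blast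
  ultimately show ?thesis
    unfolding var_convex_witness_def
    using r_pos \<psi>_convex \<psi>_lsc \<psi>_below_h \<psi>_graph_imp_h_graph(2) by (simp; blast)
qed

end

theorem mainTheorem17:
  fixes f g :: "real^'n \<Rightarrow> ereal" and xb vb :: "real^'n" and W :: "(real^'n) set"
    and G :: "real^'n \<Rightarrow> real^'n"
  assumes "proper_fun f" and "lsc_on UNIV f" and "f xb < \<infinity>"
    and "\<forall>x. g x \<noteq> -\<infinity>" and "ext_convex_on UNIV g"
    and "open W" and "xb \<in> W" and "\<forall>x\<in>W. g x \<noteq> \<infinity>"
    and "\<forall>x\<in>W. ((\<lambda>y. real_of_ereal (g y)) has_derivative (\<lambda>u. G x \<bullet> u)) (at x)"
    and "continuous_on W G"
    and "var_convex_at f xb vb"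
  shows "var_convex_at (\<lambda>x. f x + g x) xb (vb + G xb)"
proof -
  define gr where "gr y = real_of_ereal (g y)" for y
  have g: "\<forall>y\<in>W. g y = ereal (gr y)"
    using assms(4,8) by (auto simp: gr_def ereal_real)
  have gr: "\<forall>y\<in>W. (gr has_derivative (\<lambda>u. G y \<bullet> u)) (at y)"
    using assms(9) by (simp add: gr_def[abs_def])
  then have "continuous_on W gr"
    by (meson continuous_at_imp_continuous_on has_derivative_continuous)
  obtain U V \<phi> \<epsilon> where wit: "var_convex_witness f xb vb U V \<phi> \<epsilon>"
    using assms(11) var_convex_at_iff_witness by blast
  then have "open U" "open V" "xb \<in> U" "vb \<in> V" "\<epsilon>/2 > 0"
    by (simp_all add: var_convex_witness_def)
  then obtain r where "var_convex_C1_perturbation f g \<phi> gr G xb vb U V W \<epsilon> r"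
    using small_shift_balls_exist[of U V W xb vb "\<epsilon>/2" gr G] assms(6,7,10) \<open>continuous_on W gr\<close>
      var_convex_C1_perturbation.intro[OF wit assms(6) g assms(5) gr assms(10)] by metis
  from var_convex_C1_perturbation.shifted_witness[OF this]
  show ?thesis using var_convex_at_iff_witness by blast
qed

end
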